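(* Let $J=\{1,2\}\times\{1,2\}$, let $(a_{i,j})$ be the square array of strongly matricially free Toeplitz operators $a_{i,j}=\ell_{i,j}+f_{i,j}(\ell_{i,j}^* )$ on $\mathcal{N}$, let $R_{i,j}$ be the R-transform of the distribution of $a_{i,j}$ in the state $\varphi_{i,j}$, let $A=\sum_{i,j}a_{i,j}$, and let $\mathcal{R}_A(z)=\sum_{i,j}R_{i,j}(z)1_{i,j}$ be the corresponding matricial R-transform and $C_A(z)=\frac1z+\mathcal{R}_A(z)$. Then for $|z|$ sufficiently small and positive, $C_A(z)$ has the multiplicative inverse $$B_A(z)=\frac{z}{1+z(R_{1,1}(z)+R_{2,2}(z))}\,p+\frac{z}{1+z(R_{1,1}(z)+R_{2,1}(z))}\,p_{1,1}+\frac{z}{1+z(R_{2,2}(z)+R_{1,2}(z))}\,p_{2,2}+\frac{z}{1+z(R_{1,2}(z)+R_{2,1}(z))}\,(p_{1,2}+p_{2,1}),$$ where the sums $R_{1,1}+R_{2,2}$, $R_{1,1}+R_{2,1}$, $R_{2,2}+R_{1,2}$, $R_{1,2}+R_{2,1}$ are the R-transforms of the free convolutions $\mu_{1,1}\boxplus\mu_{2,2}$, $\mu_{1,1}\boxplus\mu_{2,1}$, $\mu_{2,2}\boxplus\mu_{1,2}$, $\mu_{1,2}\boxplus\mu_{2,1}$ of the distributions $\mu_{i,j}$ of $a_{i,j}$ in $\varphi_{i,j}$.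
   Context: Fock space (square array). Let $(\alpha_{i,j})_{i,j\in\{1,2\}}$ be positive reals, $\{e_{i,j}\}$ orthonormal vectors, $\mathcal{F}$ the full Fock space over $\bigoplus_{i,j}\mathbb{C}e_{i,j}$ with vacuum $\Omega$. The strongly matricially free Fock space $\mathcal{N}\subseteq\mathcal{F}$ is the closed span of $\Omega$ and all simple tensors $e_{i_1,i_2}^{\otimes n_1}\otimes e_{i_2,i_3}^{\otimes n_2}\otimes\dots\otimes e_{i_{m-1},i_m}^{\otimes n_{m-1}}\otimes e_{i_m,i_m}^{\otimes n_m}$ ($m\ge1$, $n_k\ge1$, $i_1\neq\dots\neq i_m$). With $P$ the projection onto $\mathcal{N}$ and $\ell(e)w=e\otimes w$, set $\ell_{i,j}=\alpha_{i,j}P\ell(e_{i,j})|_{\mathcal{N}}$. Let $\mathcal{N}_{i,j}$ be the closed span of those simple tensors whose first factor is $e_{i,j}$, $p$ the projection onto $\mathbb{C}\Omega$ and $p_{i,j}$ the projection onto $\mathcal{N}_{i,j}$. Internal units: $1_{j,j}$ is the projection onto $\mathbb{C}\Omega\oplus\mathcal{N}_{j,j}$, and for $i\ne j$, $1_{i,j}$ is the projection onto $\mathcal{N}\ominus(\mathbb{C}\Omega\oplus\mathcal{N}_{i,i})$. States $\varphi_{i,j}(x)=\langle x\Omega_{i,j},\Omega_{i,j}\rangle$, $\Omega_{j,j}=\Omega$, $\Omega_{i,j}=e_{j,j}$ ($i\ne j$). Toeplitz operators: $a_{i,j}=\ell_{i,j}+f_{i,j}(\ell_{i,j}^* )$ for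 polynomials $f_{i,j}(w)=\sum_{n=0}^dc_{i,j}(n)w^n$, with $f_{i,j}(\ell_{i,j}^* ):=c_{i,j}(0)1_{i,j}+\sum_{n\ge1}c_{i,j}(n)(\ell_{i,j}^* )^n$. The R-transform of a distribution with moments $m_n$ is the power series $R$ analytic near $0$ with $G(1/z+R(z))=z$ for small $|z|>0$, $G(w)=\sum_n m_nw^{-n-1}$. *)

theory Defs
  imports "HOL-Analysis.Analysis" "HOL-Computational_Algebra.Polynomial"
begin

text \<open>A letter (i,j) stands for the
  basis vector e_(i,j); a word (list of letters) stands for the simple tensor of its
  letters; the empty word stands for the vacuum Omega.  Vectors are coefficient
  functions on words (coordinates w.r.t. the orthonormal basis of simple tensors).\<close>

type_synonym smf_letter = "nat \<times> nat"
type_synonym smf_word = "smf_letter list"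
type_synonym smf_vec = "smf_word \<Rightarrow> complex"

definition smf_idx :: "nat set" where "smf_idx = {1, 2}"

text \<open>Simple tensors spanning the strongly matricially free Fock space N:
  the vacuum and
  e_(i1,i2)^n1 (x) e_(i2,i3)^n2 (x) ... (x) e_(i(m-1),im)^n(m-1) (x) e_(im,im)^nm
  with m >= 1, all n_k >= 1, consecutive indices distinct (i k is i_(k+1) here).\<close>
definition smf_words :: "smf_word set" where
  "smf_words = {[]} \<union>
     {concat (map (\<lambda>k. replicate (n k) (i k, i (Suc k))) [0..<m - 1])
        @ replicate (n (m - 1)) (i (m - 1), i (m - 1)) | m i n.
        m \<ge> 1 \<and> (\<forall>k<m. n k \<ge> 1 \<and> i k \<in> smf_idx) \<and> (\<forall>k. Suc k < m \<longrightarrow> i k \<noteq> i (Suc k))}"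

definition fock_space :: "smf_vec set" where
  "fock_space = {v. (\<forall>w. w \<notin> lists (smf_idx \<times> smf_idx) \<longrightarrow> v w = 0)
                    \<and> (\<lambda>w. (cmod (v w))\<^sup>2) summable_on UNIV}"

text \<open>The Hilbert space N (closed span of the simple tensors above).\<close>
definition smf_space :: "smf_vec set" where
  "smf_space = {v. (\<forall>w. w \<notin> smf_words \<longrightarrow> v w = 0) \<and> (\<lambda>w. (cmod (v w))\<^sup>2) summable_on UNIV}"

definition smf_inner :: "smf_vec \<Rightarrow> smf_vec \<Rightarrow> complex" where
  "smf_inner x y = (\<Sum>\<^sub>\<infinity>w. x w * cnj (y w))"

definition smf_basis :: "smf_word \<Rightarrow> smf_vec" where
  "smf_basis u = (\<lambda>w. if w = u then 1 else 0)"

text \<open>Left creation operator l(e) w = e (x) w on the full Fock space.\<close>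
definition fock_create :: "smf_letter \<Rightarrow> smf_vec \<Rightarrow> smf_vec" where
  "fock_create e v = (\<lambda>w. if w \<noteq> [] \<and> hd w = e then v (tl w) else 0)"

definition smf_P :: "smf_vec \<Rightarrow> smf_vec" where
  "smf_P v = (\<lambda>w. if w \<in> smf_words then v w else 0)"

definition smf_ell :: "(nat \<Rightarrow> nat \<Rightarrow> real) \<Rightarrow> nat \<Rightarrow> nat \<Rightarrow> smf_vec \<Rightarrow> smf_vec" where
  "smf_ell \<alpha> i j v = (\<lambda>w. complex_of_real (\<alpha> i j) * smf_P (fock_create (i, j) v) w)"

text \<open>Its adjoint on N, written out explicitly:
  (l_(i,j)^* v)(w) = alpha_(i,j) v((i,j) w) when (i,j) w is a basis word of N.\<close>
definition smf_ell_adj :: "(nat \<Rightarrow> nat \<Rightarrow> real) \<Rightarrow> nat \<Rightarrow> nat \<Rightarrow> smf_vec \<Rightarrow> smf_vec" where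
  "smf_ell_adj \<alpha> i j v = (\<lambda>w. if w \<in> smf_words \<and> (i, j) # w \<in> smf_words
                                then complex_of_real (\<alpha> i j) * v ((i, j) # w) else 0)"

definition smf_p :: "smf_vec \<Rightarrow> smf_vec" where
  "smf_p v = (\<lambda>w. if w = [] then v w else 0)"

definition smf_pij :: "nat \<Rightarrow> nat \<Rightarrow> smf_vec \<Rightarrow> smf_vec" where
  "smf_pij i j v = (\<lambda>w. if w \<in> smf_words \<and> w \<noteq> [] \<and> hd w = (i, j) then v w else 0)"

definition smf_unit :: "nat \<Rightarrow> nat \<Rightarrow> smf_vec \<Rightarrow> smf_vec" where
  "smf_unit i j v = (\<lambda>w.
     if i = j then (if w \<in> smf_words \<and> (w = [] \<or> hd w = (j, j)) then v w else 0)
     else (if w \<in> smf_words \<and> w \<noteq> [] \<and> hd w \<noteq> (i, i) then v w else 0))"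

definition smf_Omega :: "nat \<Rightarrow> nat \<Rightarrow> smf_vec" where
  "smf_Omega i j = (if i = j then smf_basis [] else smf_basis [(j, j)])"

definition smf_state :: "nat \<Rightarrow> nat \<Rightarrow> (smf_vec \<Rightarrow> smf_vec) \<Rightarrow> complex" where
  "smf_state i j x = smf_inner (x (smf_Omega i j)) (smf_Omega i j)"

text \<open>Toeplitz operator a_(i,j) = l_(i,j) + f_(i,j)(l_(i,j)^*), with
  f(l^*) = c(0) 1_(i,j) + sum_(n>=1) c(n) (l^*)^n.\<close>
definition smf_toeplitz ::
  "(nat \<Rightarrow> nat \<Rightarrow> real) \<Rightarrow> (nat \<Rightarrow> nat \<Rightarrow> complex poly) \<Rightarrow> nat \<Rightarrow> nat \<Rightarrow> smf_vec \<Rightarrow> smf_vec" where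
  "smf_toeplitz \<alpha> f i j v = (\<lambda>w. smf_ell \<alpha> i j v w
      + coeff (f i j) 0 * smf_unit i j v w
      + (\<Sum>n = 1..degree (f i j). coeff (f i j) n * ((smf_ell_adj \<alpha> i j ^^ n) v) w))"

text \<open>R-transform of a distribution with moments m: R analytic near 0 and
  G(1/z + R z) = z for small |z| > 0, where G(w) = sum_n m_n w^(-n-1).\<close>
definition is_R_transform :: "(nat \<Rightarrow> complex) \<Rightarrow> (complex \<Rightarrow> complex) \<Rightarrow> bool" where
  "is_R_transform m R \<longleftrightarrow> R analytic_on {0} \<and>
     (\<exists>\<delta>>0. \<forall>z. 0 < norm z \<and> norm z < \<delta> \<longrightarrow>
        (\<lambda>n. m n / (1 / z + R z) ^ Suc n) sums z)"

definition smf_C :: "(nat \<Rightarrow> nat \<Rightarrow> complex \<Rightarrow> complex) \<Rightarrow> complex \<Rightarrow> smf_vec \<Rightarrow> smf_vec" where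
  "smf_C R z v = (\<lambda>w. v w / z + (\<Sum>(i, j)\<in>smf_idx \<times> smf_idx. R i j z * smf_unit i j v w))"

definition smf_B :: "(nat \<Rightarrow> nat \<Rightarrow> complex \<Rightarrow> complex) \<Rightarrow> complex \<Rightarrow> smf_vec \<Rightarrow> smf_vec" where
  "smf_B R z v = (\<lambda>w.
       z / (1 + z * (R 1 1 z + R 2 2 z)) * smf_p v w
     + z / (1 + z * (R 1 1 z + R 2 1 z)) * smf_pij 1 1 v w
     + z / (1 + z * (R 2 2 z + R 1 2 z)) * smf_pij 2 2 v w
     + z / (1 + z * (R 1 2 z + R 2 1 z)) * (smf_pij 1 2 v w + smf_pij 2 1 v w))"

end

theory Submission
  imports Defs
begin

text \<open>The internal units are coordinate projections, so on a basis word w of N the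
  matricial R-transform acts as multiplication by the sum of the R_(i,j) with
  w in the range of 1_(i,j). That sum depends only on which of the four blocks
  C Omega, N_(1,1), N_(2,2), N_(1,2) + N_(2,1) contains w, so C_A(z) is diagonal with
  respect to this decomposition, with eigenvalue 1/z + s on a block with sum s, and
  B_A(z) multiplies the same block by z/(1 + z s). The four denominators tend to 1 as
  z \<rightarrow> 0 because the R-transforms are analytic, hence continuous, at 0;
  this analyticity is all that is used of the Toeplitz operators and their states.\<close>

lemma Nil_in_smf_words: "[] \<in> smf_words"
  unfolding smf_words_def by simp

lemma smf_words_letters:
  assumes "w \<in> smf_words"
  shows "set w \<subseteq> smf_idx \<times> smf_idx"
proof (cases "w = []")
  case False
  with assms obtain m i n where
    w: "w = concat (map (\<lambda>k. replicate (n k) (i k, i (Suc k))) [0..<m - 1])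
            @ replicate (n (m - 1)) (i (m - 1), i (m - 1))"
    and "m \<ge> 1" and "\<forall>k<m. n k \<ge> 1 \<and> i k \<in> smf_idx"
    unfolding smf_words_def by blast
  then show ?thesis
    unfolding w by (auto dest!: in_set_replicate[THEN iffD1])
qed simp

lemma smf_idx_times_smf_idx: "smf_idx \<times> smf_idx = {(1,1), (1,2), (2,1), (2,2)}"
  unfolding smf_idx_def by auto

lemma hd_smf_words:
  assumes "w \<in> smf_words" and "w \<noteq> []"
  shows "hd w \<in> {(1,1), (1,2), (2,1), (2,2)}"
  using smf_words_letters[OF assms(1)] hd_in_set[OF assms(2)]
  unfolding smf_idx_times_smf_idx by blast

definition smf_block_R :: "(nat \<Rightarrow> nat \<Rightarrow> complex \<Rightarrow> complex) \<Rightarrow> complex \<Rightarrow> smf_word \<Rightarrow> complex"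
  where "smf_block_R R z w =
    (if w = [] then R 1 1 z + R 2 2 z
     else if hd w = (1,1) then R 1 1 z + R 2 1 z
     else if hd w = (2,2) then R 2 2 z + R 1 2 z
     else R 1 2 z + R 2 1 z)"

lemma smf_C_apply:
  assumes "w \<in> smf_words"
  shows "smf_C R z v w = (1 / z + smf_block_R R z w) * v w"
proof (cases "w = []")
  case False
  with assms have "hd w \<in> {(1,1), (1,2), (2,1), (2,2)}"
    by (rule hd_smf_words)
  with assms False show ?thesis
    unfolding smf_C_def smf_block_R_def smf_unit_def smf_idx_times_smf_idx
    by (auto simp: algebra_simps)
qed (use assms in \<open>simp add: smf_C_def smf_block_R_def smf_unit_def smf_idx_times_smf_idx
                              algebra_simps\<close>)

lemma smf_C_apply_outside:
  assumes "w \<notin> smf_words"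
  shows "smf_C R z v w = v w / z"
  using assms unfolding smf_C_def smf_unit_def smf_idx_times_smf_idx by simp

lemma smf_B_apply:
  assumes "w \<in> smf_words"
  shows "smf_B R z v w = z / (1 + z * smf_block_R R z w) * v w"
proof (cases "w = []")
  case False
  with assms have "hd w \<in> {(1,1), (1,2), (2,1), (2,2)}"
    by (rule hd_smf_words)
  with assms False show ?thesis
    unfolding smf_B_def smf_block_R_def smf_p_def smf_pij_def by auto
qed (simp add: smf_B_def smf_block_R_def smf_p_def smf_pij_def)

lemma smf_B_apply_outside:
  assumes "w \<notin> smf_words"
  shows "smf_B R z v w = 0"
  using assms Nil_in_smf_words unfolding smf_B_def smf_p_def smf_pij_def by auto

lemma divide_one_plus_mult_inverse:
  fixes z s :: "'a :: field"
  assumes "z \<noteq> 0" and "1 + z * s \<noteq> 0"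
  shows "z / (1 + z * s) * (1 / z + s) = 1"
proof -
  have "z * (1 / z + s) = 1 + z * s"
    using assms(1) by (simp add: distrib_left)
  then show ?thesis
    using assms(2) by (metis times_divide_eq_left mult.commute divide_self)
qed

lemma smf_B_C_inverse:
  assumes "z \<noteq> 0" and "\<And>w. 1 + z * smf_block_R R z w \<noteq> 0" and "v \<in> smf_space"
  shows "smf_B R z (smf_C R z v) = v" and "smf_C R z (smf_B R z v) = v"
proof -
  define c b where "c w = 1 / z + smf_block_R R z w" and "b w = z / (1 + z * smf_block_R R z w)"
    for w
  have C: "smf_C R z x w = c w * x w" and B: "smf_B R z x w = b w * x w"
    if "w \<in> smf_words" for x w
    using that by (simp_all add: smf_C_apply smf_B_apply c_def b_def)
  have bc: "b w * c w = 1" for w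
    unfolding b_def c_def by (rule divide_one_plus_mult_inverse[OF assms(1,2)])
  have v_outside: "w \<notin> smf_words \<Longrightarrow> v w = 0" for w
    using assms(3) unfolding smf_space_def by blast
  show "smf_B R z (smf_C R z v) = v"
  proof
    fix w
    show "smf_B R z (smf_C R z v) w = v w"
    proof (cases "w \<in> smf_words")
      case True
      then have "smf_B R z (smf_C R z v) w = (b w * c w) * v w"
        by (simp add: B C)
      then show ?thesis by (simp add: bc)
    qed (simp add: smf_B_apply_outside v_outside)
  qed
  show "smf_C R z (smf_B R z v) = v"
  proof
    fix w
    show "smf_C R z (smf_B R z v) w = v w"
    proof (cases "w \<in> smf_words")
      case True
      then have "smf_C R z (smf_B R z v) w = (b w * c w) * v w"
        by (simp add: B C)
      then show ?thesis by (simp add: bc)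
    qed (simp add: smf_C_apply_outside smf_B_apply_outside v_outside)
  qed
qed

lemma eventually_one_plus_mult_neq_zero:
  fixes g :: "'a :: real_normed_field \<Rightarrow> 'a"
  assumes "isCont g 0"
  shows "eventually (\<lambda>z. 1 + z * g z \<noteq> 0) (at 0)"
proof -
  have "isCont (\<lambda>z. 1 + z * g z) 0"
    using assms by (intro continuous_intros)
  then have "((\<lambda>z. 1 + z * g z) \<longlongrightarrow> 1) (at 0)"
    by (simp add: isCont_def)
  then show ?thesis
    by (rule tendsto_imp_eventually_ne) simp
qed

lemma eventually_smf_block_R_denominators:
  assumes "\<And>i j. i \<in> smf_idx \<Longrightarrow> j \<in> smf_idx \<Longrightarrow> R i j analytic_on {0}"
  shows "eventually (\<lambda>z. \<forall>w. 1 + z * smf_block_R R z w \<noteq> 0) (at 0)"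
proof -
  have cont: "isCont (\<lambda>z. R i j z + R k l z) 0"
    if "i \<in> smf_idx" "j \<in> smf_idx" "k \<in> smf_idx" "l \<in> smf_idx" for i j k l
    using assms that by (intro continuous_intros analytic_at_imp_isCont) auto
  have "eventually (\<lambda>z. 1 + z * (R 1 1 z + R 2 2 z) \<noteq> 0 \<and> 1 + z * (R 1 1 z + R 2 1 z) \<noteq> 0
          \<and> 1 + z * (R 2 2 z + R 1 2 z) \<noteq> 0 \<and> 1 + z * (R 1 2 z + R 2 1 z) \<noteq> 0) (at 0)"
    by (intro eventually_conj eventually_one_plus_mult_neq_zero cont)
       (simp_all add: smf_idx_def)
  then show ?thesis
    by eventually_elim (simp add: smf_block_R_def)
qed

theorem proposition5p2:
  fixes \<alpha> :: "nat \<Rightarrow> nat \<Rightarrow> real"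
    and f :: "nat \<Rightarrow> nat \<Rightarrow> complex poly"
    and R :: "nat \<Rightarrow> nat \<Rightarrow> complex \<Rightarrow> complex"
  assumes "\<forall>i\<in>smf_idx. \<forall>j\<in>smf_idx. \<alpha> i j > 0"
    and "\<forall>i\<in>smf_idx. \<forall>j\<in>smf_idx.
           is_R_transform (\<lambda>n. smf_state i j (smf_toeplitz \<alpha> f i j ^^ n)) (R i j)"
  shows "\<exists>\<epsilon>>0. \<forall>z. 0 < norm z \<and> norm z < \<epsilon> \<longrightarrow>
           (\<forall>v\<in>smf_space. smf_B R z (smf_C R z v) = v \<and> smf_C R z (smf_B R z v) = v)"
proof -
  have "R i j analytic_on {0}" if "i \<in> smf_idx" "j \<in> smf_idx" for i j
    using assms(2) that unfolding is_R_transform_def by blast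
  then have "eventually (\<lambda>z. \<forall>w. 1 + z * smf_block_R R z w \<noteq> 0) (at 0)"
    by (rule eventually_smf_block_R_denominators)
  then obtain \<epsilon> where "\<epsilon> > 0"
    and \<epsilon>: "\<And>z. z \<noteq> 0 \<Longrightarrow> norm z < \<epsilon> \<Longrightarrow> \<forall>w. 1 + z * smf_block_R R z w \<noteq> 0"
    unfolding eventually_at by (auto simp: dist_norm)
  then show ?thesis
    using smf_B_C_inverse by (metis norm_zero order_less_irrefl)
qed

end
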